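(* Let $k\ge 1$ and let $A_1,\dots,A_{2k-1}$ be (possibly empty) balanced parenthesis sequences inducing ordered matchings $M_1,\dots,M_{2k-1}$ respectively. Define parenthesis sequences $B_k=(A_k)$ and, for $j=k-1,k-2,\dots,1$, $B_j=(A_j\,B_{j+1}\,A_{2k-j})$ (concatenation inside one new pair of parentheses), so that $B_1=(A_1(A_2(\cdots(A_{k-1}(A_k)A_{k+1})\cdots)A_{2k-2})A_{2k-1})$. Then $B_1$ is a balanced parenthesis sequence; let $M$ be the matching it induces. Then $$r_<(M,K_3)\le r_<(NM_{k+t},K_3),\qquad\text{where } t=\sum_{i=1}^{k}\max\big(r_<(M_i,K_3),\,r_<(M_{2k-i},K_3)\big).$$
   Context: An ordered graph on $[N]$ is a graph with vertex set $\{1,\dots,N\}$ equipped with the natural order. Given a red/blue coloring of the edges of the complete graph on $[N]$, a red (ordered) copy of an ordered graph $G$ on $[p]$ is a strictly increasing map $\varphi:[p]\to[N]$ such that $\varphi(u)\varphi(v)$ is red for every edge $uv$ of $G$. The ordered Ramsey number $r_<(G,K_3)$ is the smallest $N$ such that every red/blue coloring of the edges of the complete graph on $[N]$ contains either a red ordered copy of $G$ or a blue triangle. A balanced parenthesis sequence of length $2m$ is a string of $m$ open and $m$ close parentheses that is correctly matched; it induces the ordered matching on $[2m]$ whose edges are the pairs $\{i,j\}$ such that the parenthesis in position $i$ is an open parenthesis matched with the close parenthesis in position $j$. The empty sequence induces the empty matching on $0$ vertices. The nested matching $NM_k$ is the ordered graph on $[2k]$ in which $\{i,j\}$ is an edge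 if and only if $i+j=2k+1$. *)

theory Defs
  imports Main
begin

text \<open>Ordered graphs on [p] = {1..p} are given by p and an edge predicate E,
  where only E u v with 1 \<le> u < v \<le> p is consulted. A red/blue colouring of
  the complete graph on [N] is a predicate red, where the edge {i,j} with i < j
  is red iff red i j (and blue otherwise).\<close>

definition has_red_copy :: "nat \<Rightarrow> (nat \<Rightarrow> nat \<Rightarrow> bool) \<Rightarrow> nat \<Rightarrow> (nat \<Rightarrow> nat \<Rightarrow> bool) \<Rightarrow> bool" where
  "has_red_copy p E N red \<longleftrightarrow>
     (\<exists>\<phi>. (\<forall>u\<in>{1..p}. \<phi> u \<in> {1..N}) \<and> strict_mono_on {1..p} \<phi> \<and>
          (\<forall>u v. 1 \<le> u \<and> u < v \<and> v \<le> p \<and> E u v \<longrightarrow> red (\<phi> u) (\<phi> v)))"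

definition has_blue_triangle :: "nat \<Rightarrow> (nat \<Rightarrow> nat \<Rightarrow> bool) \<Rightarrow> bool" where
  "has_blue_triangle N red \<longleftrightarrow>
     (\<exists>a b c. 1 \<le> a \<and> a < b \<and> b < c \<and> c \<le> N \<and> \<not> red a b \<and> \<not> red a c \<and> \<not> red b c)"

definition ord_ramsey_K3 :: "nat \<Rightarrow> (nat \<Rightarrow> nat \<Rightarrow> bool) \<Rightarrow> nat" where
  "ord_ramsey_K3 p E =
     (LEAST N. \<forall>red. has_red_copy p E N red \<or> has_blue_triangle N red)"

text \<open>Parenthesis sequences: True = open parenthesis, False = close parenthesis.\<close>
definition depth :: "bool list \<Rightarrow> int" where
  "depth xs = (\<Sum>b\<leftarrow>xs. if b then 1 else -1)"

definition balanced :: "bool list \<Rightarrow> bool" where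
  "balanced xs \<longleftrightarrow> (\<forall>n \<le> length xs. depth (take n xs) \<ge> 0) \<and> depth xs = 0"

text \<open>Positions are 1-based: position i holds xs ! (i - 1).\<close>
definition matched :: "bool list \<Rightarrow> nat \<Rightarrow> nat \<Rightarrow> bool" where
  "matched xs i j \<longleftrightarrow> 1 \<le> i \<and> i < j \<and> j \<le> length xs \<and>
     xs ! (i - 1) \<and> \<not> xs ! (j - 1) \<and> balanced (take (j - i - 1) (drop i xs))"

text \<open>The ordered matching induced by xs lives on [length xs] with edge predicate matched xs.\<close>

definition nested_matching :: "nat \<Rightarrow> nat \<Rightarrow> nat \<Rightarrow> bool" where
  "nested_matching k i j \<longleftrightarrow> i + j = 2 * k + 1"

text \<open>nestB A k d is the sequence B_(k-d): B_k = (A_k), B_j = (A_j B_(j+1) A_(2k-j)).\<close>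
fun nestB :: "(nat \<Rightarrow> bool list) \<Rightarrow> nat \<Rightarrow> nat \<Rightarrow> bool list" where
  "nestB A k 0 = [True] @ A k @ [False]"
| "nestB A k (Suc d) = [True] @ A (k - Suc d) @ nestB A k d @ A (k + Suc d) @ [False]"

end

theory Submission
  imports Defs "HOL-Library.Ramsey"
begin

(* Fix a colouring of [N] without blue triangle that contains a red copy of NM_n, n = k + t,
  and let s_j be the j-th summand of t. The outer pair of B_1 goes to the outermost edge of
  NM_n. The s_1 vertices following its left end span a K_3-free colouring on at least
  r_<(M_1, K_3) vertices, hence contain a red copy of M_1; symmetrically the s_1 vertices
  preceding its right end contain a red copy of M_(2k-1). B_2 is placed recursively in the
  window strictly between these blocks, whose ends are again matched in NM_n. Since no matched
  pair crosses a balanced factor, the pieces assemble into a red copy of M, and the k layers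
  consume exactly the k + t outermost edges of NM_n. *)

section \<open>Balanced parenthesis sequences\<close>

lemma depth_Nil [simp]: "depth [] = 0"
  by (simp add: depth_def)

lemma depth_Cons [simp]: "depth (b # xs) = (if b then 1 else -1) + depth xs"
  by (simp add: depth_def)

lemma depth_append [simp]: "depth (xs @ ys) = depth xs + depth ys"
  by (simp add: depth_def)

definition parenthesize :: "bool list \<Rightarrow> bool list" where
  "parenthesize xs = True # xs @ [False]"

lemma balanced_append:
  assumes "balanced xs" "balanced ys"
  shows "balanced (xs @ ys)"
  unfolding balanced_def
proof (intro conjI allI impI)
  fix n assume "n \<le> length (xs @ ys)"
  then show "0 \<le> depth (take n (xs @ ys))"
    using assms by (cases "n \<le> length xs") (auto simp: balanced_def)
qed (use assms in \<open>simp add: balanced_def\<close>)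

lemma balanced_parenthesize:
  assumes "balanced xs"
  shows "balanced (parenthesize xs)"
  unfolding balanced_def
proof (intro conjI allI impI)
  fix n assume "n \<le> length (parenthesize xs)"
  then show "0 \<le> depth (take n (parenthesize xs))"
    using assms by (cases n) (auto simp: parenthesize_def balanced_def take_Cons')
qed (use assms in \<open>simp add: balanced_def parenthesize_def\<close>)

lemma depth_drop_after_open:
  assumes "balanced xs" "m < length xs" "xs ! m"
  shows "depth (drop (Suc m) xs) < 0"
proof -
  have "depth xs = depth (take m xs @ xs ! m # drop (Suc m) xs)"
    using id_take_nth_drop[OF assms(2)] by simp
  then have "depth xs = depth (take m xs) + 1 + depth (drop (Suc m) xs)"
    using assms(3) by simp
  moreover have "depth xs = 0" "depth (take m xs) \<ge> 0"
    using assms(1,2) by (auto simp: balanced_def)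
  ultimately show ?thesis by linarith
qed

lemma open_after_balanced_prefix:
  assumes "balanced xs" "m < length xs" "balanced (take m xs)"
  shows "xs ! m"
proof -
  have "depth (take (Suc m) xs) = depth (take m xs) + (if xs ! m then 1 else -1)"
    using take_Suc_conv_app_nth[OF assms(2)] by simp
  moreover have "depth (take m xs) = 0" "depth (take (Suc m) xs) \<ge> 0"
    using assms by (auto simp: balanced_def)
  ultimately show ?thesis by (auto split: if_splits)
qed

lemma matched_Cons_Suc:
  "0 < i \<Longrightarrow> matched (x # xs) (Suc i) (Suc j) \<longleftrightarrow> matched xs i j"
  by (auto simp: matched_def)

lemma matched_append_left:
  "j \<le> length xs \<Longrightarrow> matched (xs @ ys) i j \<longleftrightarrow> matched xs i j"
  by (auto simp: matched_def nth_append)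

lemma matched_append_right:
  "0 < i \<Longrightarrow> matched (xs @ ys) (length xs + i) (length xs + j) \<longleftrightarrow> matched ys i j"
  by (auto simp: matched_def nth_append)

lemma not_matched_across_balanced:
  assumes "balanced xs" "i \<le> length xs" "length xs < j"
  shows "\<not> matched (xs @ ys) i j"
proof
  assume m: "matched (xs @ ys) i j"
  then have "xs ! (i - 1)" "1 \<le> i" "j \<le> length (xs @ ys)"
    using assms(2) by (auto simp: matched_def nth_append)
  then have neg: "depth (drop i xs) < 0"
    using depth_drop_after_open[OF assms(1), of "i - 1"] assms(2) by simp
  define seg where "seg = take (j - i - 1) (drop i (xs @ ys))"
  have "balanced seg"
    using m by (simp add: matched_def seg_def)
  moreover have "length xs - i \<le> length seg"
    using assms(3) \<open>j \<le> length (xs @ ys)\<close> by (simp add: seg_def)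
  ultimately have "depth (take (length xs - i) seg) \<ge> 0"
    unfolding balanced_def by blast
  moreover have "take (length xs - i) seg = drop i xs"
    using assms(2,3) by (simp add: seg_def min_def)
  ultimately show False
    using neg by simp
qed

lemma matched_append:
  assumes "balanced xs" "matched (xs @ ys) i j"
  shows "(j \<le> length xs \<and> matched xs i j)
    \<or> (length xs < i \<and> matched ys (i - length xs) (j - length xs))"
proof -
  have "i < j"
    using assms(2) by (simp add: matched_def)
  consider "j \<le> length xs" | "length xs < i" | "i \<le> length xs" "length xs < j"
    by linarith
  then show ?thesis
  proof cases
    case 1
    then show ?thesis using assms(2) matched_append_left by blast
  next
    case 2
    then have "matched ys (i - length xs) (j - length xs)"
      using assms(2) \<open>i < j\<close> matched_append_right[of "i - length xs" xs ys "j - length xs"]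
      by simp
    with 2 show ?thesis by simp
  next
    case 3
    then show ?thesis using not_matched_across_balanced assms by blast
  qed
qed

lemma matched_parenthesize:
  assumes "balanced xs" "matched (parenthesize xs) i j"
  shows "(i = 1 \<and> j = length xs + 2) \<or> (1 < i \<and> matched xs (i - 1) (j - 1))"
proof (cases "i = 1")
  case True
  show ?thesis
  proof (rule ccontr)
    assume "\<not> ?thesis"
    with assms(2) True have j: "2 \<le> j" "j \<le> length xs + 1"
      by (auto simp: matched_def parenthesize_def)
    define m where "m = j - 2"
    have m: "j = Suc (Suc m)" "m < length xs"
      using j by (auto simp: m_def)
    have "balanced (take m xs)" "\<not> xs ! m"
      using assms(2) True m by (auto simp: matched_def parenthesize_def nth_append)
    then show False
      using open_after_balanced_prefix[OF assms(1) m(2)] by simp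
  qed
next
  case False
  with assms(2) have "1 < i" "i < j"
    by (auto simp: matched_def)
  then have "matched (xs @ [False]) (i - 1) (j - 1)"
    using assms(2) matched_Cons_Suc[of "i - 1" True "xs @ [False]" "j - 1"]
    by (simp add: parenthesize_def)
  moreover have "\<not> matched [False] i' j'" for i' j'
    by (auto simp: matched_def)
  ultimately have "matched xs (i - 1) (j - 1)"
    using matched_append[OF assms(1)] by blast
  with \<open>1 < i\<close> show ?thesis by simp
qed

section \<open>Red copies and ordered Ramsey numbers\<close>

definition red_copy_into ::
    "nat \<Rightarrow> (nat \<Rightarrow> nat \<Rightarrow> bool) \<Rightarrow> (nat \<Rightarrow> nat \<Rightarrow> bool) \<Rightarrow> (nat \<Rightarrow> nat) \<Rightarrow> nat set \<Rightarrow> bool" where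
  "red_copy_into p E red \<phi> S \<longleftrightarrow> \<phi> ` {1..p} \<subseteq> S \<and> strict_mono_on {1..p} \<phi> \<and>
     (\<forall>u v. 1 \<le> u \<and> u < v \<and> v \<le> p \<and> E u v \<longrightarrow> red (\<phi> u) (\<phi> v))"

abbreviation matching_copy_into ::
    "bool list \<Rightarrow> (nat \<Rightarrow> nat \<Rightarrow> bool) \<Rightarrow> (nat \<Rightarrow> nat) \<Rightarrow> nat set \<Rightarrow> bool" where
  "matching_copy_into xs \<equiv> red_copy_into (length xs) (matched xs)"

lemma has_red_copy_iff_red_copy_into:
  "has_red_copy p E N red \<longleftrightarrow> (\<exists>\<phi>. red_copy_into p E red \<phi> {1..N})"
  by (simp add: has_red_copy_def red_copy_into_def image_subset_iff)

lemma red_copy_into_mono: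
  "red_copy_into p E red \<phi> S \<Longrightarrow> S \<subseteq> T \<Longrightarrow> red_copy_into p E red \<phi> T"
  by (auto simp: red_copy_into_def)

lemma red_copy_into_comp:
  assumes "red_copy_into p E (\<lambda>u v. red (\<psi> u) (\<psi> v)) \<phi> S" "strict_mono_on S \<psi>"
  shows "red_copy_into p E red (\<psi> \<circ> \<phi>) (\<psi> ` S)"
  using assms monotone_on_o[of S "(<)" "(<)" \<psi> "{1..p}" "(<)" \<phi>]
  by (auto simp: red_copy_into_def)

lemma has_blue_triangle_comp:
  assumes "strict_mono_on {1..p} \<psi>" "\<psi> ` {1..p} \<subseteq> {1..N}"
    and "has_blue_triangle p (\<lambda>u v. red (\<psi> u) (\<psi> v))"
  shows "has_blue_triangle N red"
proof -
  obtain a b c where abc: "1 \<le> a" "a < b" "b < c" "c \<le> p"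
      "\<not> red (\<psi> a) (\<psi> b)" "\<not> red (\<psi> a) (\<psi> c)" "\<not> red (\<psi> b) (\<psi> c)"
    using assms(3) unfolding has_blue_triangle_def by blast
  have "\<psi> a < \<psi> b" "\<psi> b < \<psi> c"
    using abc strict_mono_onD[OF assms(1)] by auto
  moreover have "\<psi> a \<in> {1..N}" "\<psi> c \<in> {1..N}"
    using abc assms(2) unfolding image_subset_iff by auto
  ultimately show ?thesis
    using abc(5-7) unfolding has_blue_triangle_def
    by (intro exI[of _ "\<psi> a"] exI[of _ "\<psi> b"] exI[of _ "\<psi> c"]) auto
qed

lemma matching_copy_into_append:
  assumes "balanced xs" "matching_copy_into xs red f S" "matching_copy_into ys red g T"
    and "\<forall>x\<in>S. \<forall>y\<in>T. x < y"
  shows "matching_copy_into (xs @ ys) red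
    (\<lambda>u. if u \<le> length xs then f u else g (u - length xs)) (S \<union> T)"
    (is "matching_copy_into _ _ ?h _")
proof -
  have f: "\<And>u. u \<in> {1..length xs} \<Longrightarrow> f u \<in> S" "strict_mono_on {1..length xs} f"
      "\<And>u v. matched xs u v \<Longrightarrow> red (f u) (f v)"
    and g: "\<And>u. u \<in> {1..length ys} \<Longrightarrow> g u \<in> T" "strict_mono_on {1..length ys} g"
      "\<And>u v. matched ys u v \<Longrightarrow> red (g u) (g v)"
    using assms(2,3) by (auto simp: red_copy_into_def matched_def image_subset_iff)
  have "?h ` {1..length (xs @ ys)} \<subseteq> S \<union> T"
  proof (rule image_subsetI)
    fix u assume "u \<in> {1..length (xs @ ys)}"
    then have "u \<in> {1..length xs} \<or> u - length xs \<in> {1..length ys} \<and> \<not> u \<le> length xs"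
      by auto
    then show "?h u \<in> S \<union> T"
      using f(1) g(1) by auto
  qed
  moreover have "strict_mono_on {1..length (xs @ ys)} ?h"
  proof (rule strict_mono_onI)
    fix u v assume uv: "u \<in> {1..length (xs @ ys)}" "v \<in> {1..length (xs @ ys)}" "u < v"
    consider "v \<le> length xs" | "u \<le> length xs" "length xs < v" | "length xs < u"
      by linarith
    then show "?h u < ?h v"
    proof cases
      case 1
      then show ?thesis using uv strict_mono_onD[OF f(2), of u v] by simp
    next
      case 2
      then have "u \<in> {1..length xs}" "v - length xs \<in> {1..length ys}"
        using uv by auto
      then have "f u \<in> S" "g (v - length xs) \<in> T"
        using f(1) g(1) by blast+
      then show ?thesis using 2 assms(4) by simp
    next
      case 3
      then show ?thesis
        using uv strict_mono_onD[OF g(2), of "u - length xs" "v - length xs"] by simp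
    qed
  qed
  moreover have "red (?h u) (?h v)" if "matched (xs @ ys) u v" for u v
    using matched_append[OF assms(1) that] f(3) g(3) that by (auto simp: matched_def)
  ultimately show ?thesis
    unfolding red_copy_into_def by blast
qed

lemma matching_copy_into_parenthesize:
  assumes "balanced xs" "matching_copy_into xs red g S"
    and "S \<subseteq> {a<..<b}" "a < b" "red a b"
  shows "matching_copy_into (parenthesize xs) red
    (\<lambda>u. if u = 1 then a else if u = length xs + 2 then b else g (u - 1)) (insert a (insert b S))"
    (is "matching_copy_into _ _ ?h _")
proof -
  have g: "\<And>u. u \<in> {1..length xs} \<Longrightarrow> g u \<in> S" "strict_mono_on {1..length xs} g"
      "\<And>u v. matched xs u v \<Longrightarrow> red (g u) (g v)"
    using assms(2) by (auto simp: red_copy_into_def matched_def image_subset_iff)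
  have inner: "?h u \<in> S" if "u \<in> {1<..length xs + 1}" for u
  proof -
    have "u - 1 \<in> {1..length xs}"
      using that by auto
    then show ?thesis
      using that g(1) by auto
  qed
  have "?h ` {1..length (parenthesize xs)} \<subseteq> insert a (insert b S)"
  proof (rule image_subsetI)
    fix u assume "u \<in> {1..length (parenthesize xs)}"
    then have "u = 1 \<or> u = length xs + 2 \<or> u \<in> {1<..length xs + 1}"
      by (auto simp: parenthesize_def)
    then show "?h u \<in> insert a (insert b S)"
      using inner by auto
  qed
  moreover have "strict_mono_on {1..length (parenthesize xs)} ?h"
  proof (rule strict_mono_onI)
    fix u v assume uv: "u \<in> {1..length (parenthesize xs)}" "v \<in> {1..length (parenthesize xs)}" "u < v"
    consider "u = 1" "v = length xs + 2" | "u = 1" "v \<in> {1<..length xs + 1}"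
      | "u \<in> {1<..length xs + 1}" "v = length xs + 2" | "u \<in> {1<..length xs + 1}" "v \<in> {1<..length xs + 1}"
      using uv by (fastforce simp: parenthesize_def)
    then show "?h u < ?h v"
    proof cases
      case 1
      then show ?thesis using assms(4) by simp
    next
      case 2
      then show ?thesis using inner[of v] assms(3) by auto
    next
      case 3
      then show ?thesis using inner[of u] assms(3) by auto
    next
      case 4
      then show ?thesis using uv strict_mono_onD[OF g(2), of "u - 1" "v - 1"] by auto
    qed
  qed
  moreover have "red (?h u) (?h v)" if "matched (parenthesize xs) u v" for u v
    using matched_parenthesize[OF assms(1) that]
  proof
    assume "u = 1 \<and> v = length xs + 2"
    then show ?thesis using assms(5) by simp
  next
    assume inside: "1 < u \<and> matched xs (u - 1) (v - 1)"
    then have "u \<noteq> length xs + 2" "v \<noteq> length xs + 2" "v \<noteq> 1"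
      by (auto simp: matched_def)
    then show ?thesis using inside g(3) by simp
  qed
  ultimately show ?thesis
    unfolding red_copy_into_def by blast
qed

definition arrows_K3 :: "nat \<Rightarrow> (nat \<Rightarrow> nat \<Rightarrow> bool) \<Rightarrow> nat \<Rightarrow> bool" where
  "arrows_K3 p E N \<longleftrightarrow> (\<forall>red. has_red_copy p E N red \<or> has_blue_triangle N red)"

lemma has_red_copy_if_red_clique:
  assumes "H \<subseteq> {1..N}" "finite H" "card H = p" "\<forall>x\<in>H. \<forall>y\<in>H. x < y \<longrightarrow> red x y"
  shows "has_red_copy p E N red"
proof -
  define \<phi> where "\<phi> u = enumerate H (u - 1)" for u
  have in_H: "\<phi> u \<in> H" if "u \<in> {1..p}" for u
    using finite_enumerate_in_set[OF assms(2)] assms(3) that by (auto simp: \<phi>_def)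
  have mono: "strict_mono_on {1..p} \<phi>"
    by (rule strict_mono_onI) (auto simp: \<phi>_def assms(2,3) intro!: finite_enumerate_mono)
  show ?thesis
    unfolding has_red_copy_def
  proof (intro exI conjI allI impI ballI)
    show "\<phi> u \<in> {1..N}" if "u \<in> {1..p}" for u
      using in_H[OF that] assms(1) by auto
    show "red (\<phi> u) (\<phi> v)" if "1 \<le> u \<and> u < v \<and> v \<le> p \<and> E u v" for u v
      using that in_H[of u] in_H[of v] strict_mono_onD[OF mono, of u v] assms(4) by auto
  qed (rule mono)
qed

lemma has_blue_triangle_if_blue_triple:
  assumes "H \<subseteq> {1..N}" "card H = 3" "\<forall>x\<in>H. \<forall>y\<in>H. x < y \<longrightarrow> \<not> red x y"
  shows "has_blue_triangle N red"
proof -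
  have "finite H"
    using assms(2) card.infinite by fastforce
  let ?e = "enumerate H"
  have "?e 0 \<in> H" "?e 1 \<in> H" "?e 2 \<in> H"
    using finite_enumerate_in_set[OF \<open>finite H\<close>] assms(2) by auto
  moreover have "?e 0 < ?e 1" "?e 1 < ?e 2"
    using finite_enumerate_mono[OF _ \<open>finite H\<close>] assms(2) by auto
  ultimately show ?thesis
    using assms(1,3) unfolding has_blue_triangle_def
    by (intro exI[of _ "?e 0"] exI[of _ "?e 1"] exI[of _ "?e 2"]) auto
qed

lemma arrows_K3_exists: "\<exists>N. arrows_K3 p E N"
proof -
  obtain r where r: "\<forall>(V :: nat set) E'. finite V \<and> r \<le> card V \<longrightarrow>
      (\<exists>R\<subseteq>V. card R = p \<and> clique R E' \<or> card R = 3 \<and> indep R E')"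
    using ramsey2[of p 3] by blast
  have "arrows_K3 p E r"
    unfolding arrows_K3_def
  proof
    fix red :: "nat \<Rightarrow> nat \<Rightarrow> bool"
    define E' where "E' = {{x, y} | x y. x < y \<and> red x y}"
    have red_iff: "{x, y} \<in> E' \<longleftrightarrow> red x y" if "x < y" for x y
      using that by (auto simp: E'_def doubleton_eq_iff)
    obtain R where R: "R \<subseteq> {1..r}" "card R = p \<and> clique R E' \<or> card R = 3 \<and> indep R E'"
      using r[rule_format, of "{1..r}" E'] by auto
    have "finite R"
      using R(1) finite_subset by blast
    show "has_red_copy p E r red \<or> has_blue_triangle r red"
      using R(2)
    proof
      assume "card R = p \<and> clique R E'"
      then show ?thesis
        using has_red_copy_if_red_clique[OF R(1) \<open>finite R\<close>] red_iff
        unfolding clique_def by (metis less_irrefl)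
    next
      assume "card R = 3 \<and> indep R E'"
      then show ?thesis
        using has_blue_triangle_if_blue_triple[OF R(1)] red_iff
        unfolding indep_def by (metis less_irrefl)
    qed
  qed
  then show ?thesis ..
qed

lemma arrows_K3_ord_ramsey_K3: "arrows_K3 p E (ord_ramsey_K3 p E)"
  using arrows_K3_exists[of p E] unfolding ord_ramsey_K3_def arrows_K3_def by (rule LeastI_ex)

lemma ord_ramsey_K3_le: "arrows_K3 p E N \<Longrightarrow> ord_ramsey_K3 p E \<le> N"
  unfolding ord_ramsey_K3_def arrows_K3_def by (rule Least_le)

lemma arrows_K3_mono:
  assumes "arrows_K3 p E N" "N \<le> N'"
  shows "arrows_K3 p E N'"
proof -
  have "has_red_copy p E N' red" if "has_red_copy p E N red" for red
    using that red_copy_into_mono[of p E red _ "{1..N}" "{1..N'}"] assms(2)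
    unfolding has_red_copy_iff_red_copy_into by auto
  moreover have "has_blue_triangle N' red" if "has_blue_triangle N red" for red
    using that assms(2) unfolding has_blue_triangle_def by (meson le_trans)
  ultimately show ?thesis
    using assms(1) unfolding arrows_K3_def by blast
qed

lemma red_copy_into_interval:
  assumes "\<not> has_blue_triangle N red" "c + s \<le> N" "ord_ramsey_K3 p E \<le> s"
  shows "\<exists>\<phi>. red_copy_into p E red \<phi> {c<..c + s}"
proof -
  have mono: "strict_mono_on {1..s} (plus c)"
    by (rule strict_mono_onI) simp
  have "plus c ` {1..s} \<subseteq> {1..N}"
    using assms(2) by auto
  then have "\<not> has_blue_triangle s (\<lambda>u v. red (plus c u) (plus c v))"
    using has_blue_triangle_comp[OF mono] assms(1) by blast
  moreover have "arrows_K3 p E s"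
    using arrows_K3_mono[OF arrows_K3_ord_ramsey_K3 assms(3)] .
  ultimately obtain \<phi> where \<phi>: "red_copy_into p E (\<lambda>u v. red (plus c u) (plus c v)) \<phi> {1..s}"
    unfolding arrows_K3_def has_red_copy_iff_red_copy_into by blast
  have image: "plus c ` {1..s} = {c<..c + s}"
  proof (intro equalityI subsetI)
    fix x assume "x \<in> {c<..c + s}"
    then have "x - c \<in> {1..s}" "x = plus c (x - c)"
      by auto
    then show "x \<in> plus c ` {1..s}"
      by blast
  qed auto
  show ?thesis
    using red_copy_into_comp[OF \<phi> mono] unfolding image by blast
qed

lemma arrows_K3_transfer:
  assumes "arrows_K3 p E N"
    and "\<And>red. \<not> has_blue_triangle p red \<Longrightarrow>
      \<forall>u v. 1 \<le> u \<and> u < v \<and> v \<le> p \<and> E u v \<longrightarrow> red u v \<Longrightarrow> has_red_copy q F p red"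
  shows "arrows_K3 q F N"
  unfolding arrows_K3_def
proof (intro allI disjCI)
  fix red assume no_blue: "\<not> has_blue_triangle N red"
  then obtain \<phi> where \<phi>: "red_copy_into p E red \<phi> {1..N}"
    using assms(1) unfolding arrows_K3_def has_red_copy_iff_red_copy_into by blast
  then have mono: "strict_mono_on {1..p} \<phi>" and range: "\<phi> ` {1..p} \<subseteq> {1..N}"
    by (auto simp: red_copy_into_def)
  have "\<not> has_blue_triangle p (\<lambda>u v. red (\<phi> u) (\<phi> v))"
    using has_blue_triangle_comp[OF mono range] no_blue by blast
  moreover have "\<forall>u v. 1 \<le> u \<and> u < v \<and> v \<le> p \<and> E u v \<longrightarrow> red (\<phi> u) (\<phi> v)"
    using \<phi> by (simp add: red_copy_into_def)
  ultimately obtain \<psi> where "red_copy_into q F (\<lambda>u v. red (\<phi> u) (\<phi> v)) \<psi> {1..p}"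
    using assms(2) unfolding has_red_copy_iff_red_copy_into by blast
  from red_copy_into_mono[OF red_copy_into_comp[OF this mono] range]
  show "has_red_copy q F N red"
    unfolding has_red_copy_iff_red_copy_into by blast
qed

section \<open>The nested construction\<close>

lemma nestB_0: "nestB A k 0 = parenthesize (A k)"
  by (simp add: parenthesize_def)

lemma nestB_Suc: "nestB A k (Suc d) = parenthesize (A (k - Suc d) @ nestB A k d @ A (k + Suc d))"
  by (simp add: parenthesize_def)

lemma balanced_nestB:
  assumes "\<forall>i\<in>{1..2*k-1}. balanced (A i)" "d < k"
  shows "balanced (nestB A k d)"
  using assms(2)
proof (induction d)
  case 0
  then have "balanced (A k)"
    using assms(1) by auto
  then show ?case
    unfolding nestB_0 by (rule balanced_parenthesize)
next
  case (Suc d)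
  then have "k - Suc d \<in> {1..2*k-1}" "k + Suc d \<in> {1..2*k-1}"
    by auto
  then have "balanced (A (k - Suc d))" "balanced (nestB A k d)" "balanced (A (k + Suc d))"
    using assms(1) Suc by auto
  then show ?case
    unfolding nestB_Suc by (intro balanced_parenthesize balanced_append)
qed

lemma matching_copy_into_layer:
  assumes "balanced xs" "balanced ys" "balanced zs"
    and "matching_copy_into xs red f {lo<..m}" "matching_copy_into ys red g {m<..m'}"
    and "matching_copy_into zs red h {m'<..<hi}"
    and "lo \<le> m" "m \<le> m'" "m' < hi" "red lo hi"
  shows "\<exists>\<phi>. matching_copy_into (parenthesize (xs @ ys @ zs)) red \<phi> {lo..hi}"
proof -
  obtain g' where g': "matching_copy_into (ys @ zs) red g' ({m<..m'} \<union> {m'<..<hi})"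
    using matching_copy_into_append[OF assms(2,5,6)] by fastforce
  have "\<forall>x\<in>{lo<..m}. \<forall>y\<in>{m<..m'} \<union> {m'<..<hi}. x < y"
    using assms(8) by auto
  then obtain f' where "matching_copy_into (xs @ ys @ zs) red f' ({lo<..m} \<union> ({m<..m'} \<union> {m'<..<hi}))"
    using matching_copy_into_append[OF assms(1,4) g'] by fastforce
  moreover have "{lo<..m} \<union> ({m<..m'} \<union> {m'<..<hi}) = {lo<..<hi}"
    using assms(7-9) by auto
  ultimately have f': "matching_copy_into (xs @ ys @ zs) red f' {lo<..<hi}"
    by simp
  have "balanced (xs @ ys @ zs)" "lo < hi"
    using assms(1-3,7-9) by (auto intro: balanced_append)
  from matching_copy_into_parenthesize[OF this(1) f' order_refl this(2) assms(10)]
  obtain \<phi> where \<phi>: "matching_copy_into (parenthesize (xs @ ys @ zs)) red \<phi> (insert lo (insert hi {lo<..<hi}))"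
    by blast
  moreover have "insert lo (insert hi {lo<..<hi}) = {lo..hi}"
    using assms(7-9) by auto
  ultimately show ?thesis
    by auto
qed

lemma nestB_matching_copy_into:
  assumes bal: "\<forall>i\<in>{1..2*k-1}. balanced (A i)"
    and bound: "\<forall>i\<in>{1..k}. ord_ramsey_K3 (length (A i)) (matched (A i)) \<le> s i \<and>
      ord_ramsey_K3 (length (A (2*k-i))) (matched (A (2*k-i))) \<le> s i"
    and no_blue: "\<not> has_blue_triangle (2*n) red"
    and nested: "\<And>u. 1 \<le> u \<Longrightarrow> u \<le> n \<Longrightarrow> red u (2*n + 1 - u)"
    and "d < k" "a + (\<Sum>i=k-d..k. 1 + s i) \<le> n"
  shows "\<exists>\<phi>. matching_copy_into (nestB A k d) red \<phi> {a<..2*n - a}"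
proof -
  have block: "\<exists>f. matching_copy_into X red f {c<..c + t}"
    if "c + t \<le> 2*n" "ord_ramsey_K3 (length X) (matched X) \<le> t" for X c t
    using red_copy_into_interval[OF no_blue that] .
  have outer: "red (a + 1) (2*n - a)" if "a < n" for a
    using nested[of "a + 1"] that by simp
  have interval: "{a<..2*n - a} = {a + 1..2*n - a}" for a
    by auto
  show ?thesis
    using assms(5,6)
  proof (induction d arbitrary: a)
    case 0
    then have room: "a + 1 + s k \<le> n"
      by simp
    have "balanced (A k)" "k \<in> {1..k}"
      using bal 0 by auto
    obtain f where f: "matching_copy_into (A k) red f {a + 1<..a + 1 + s k}"
      using block[where X = "A k" and c = "a + 1" and t = "s k"] bound \<open>k \<in> {1..k}\<close> room by auto
    have "{a + 1<..a + 1 + s k} \<subseteq> {a + 1<..<2*n - a}" "a + 1 < 2*n - a" "a < n"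
      using room by auto
    from matching_copy_into_parenthesize[OF \<open>balanced (A k)\<close> f this(1,2) outer[OF this(3)]]
    obtain \<phi> where \<phi>: "matching_copy_into (parenthesize (A k)) red \<phi>
        (insert (a + 1) (insert (2*n - a) {a + 1<..a + 1 + s k}))"
      by blast
    have "insert (a + 1) (insert (2*n - a) {a + 1<..a + 1 + s k}) \<subseteq> {a<..2*n - a}"
      using room by auto
    from red_copy_into_mono[OF \<phi> this] show ?case
      unfolding nestB_0 by blast
  next
    case (Suc d)
    define j where "j = k - Suc d"
    define a' where "a' = a + 1 + s j"
    have j: "j \<in> {1..k}" "2*k - j = k + Suc d" "k - d = Suc j"
      using Suc.prems(1) by (auto simp: j_def)
    have "(\<Sum>i=k - Suc d..k. 1 + s i) = (1 + s j) + (\<Sum>i=k-d..k. 1 + s i)"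
      using sum.atLeast_Suc_atMost[of j k "\<lambda>i. 1 + s i"] j by (simp add: j_def)
    then have room: "a' + (\<Sum>i=k-d..k. 1 + s i) \<le> n"
      using Suc.prems(2) by (simp add: a'_def)
    then have "a' \<le> n"
      by simp
    obtain g where g: "matching_copy_into (nestB A k d) red g {a'<..2*n - a'}"
      using Suc.IH[OF _ room] Suc.prems(1) by auto
    have "ord_ramsey_K3 (length (A j)) (matched (A j)) \<le> s j"
      "ord_ramsey_K3 (length (A (k + Suc d))) (matched (A (k + Suc d))) \<le> s j"
      using bound j(1) unfolding j(2)[symmetric] by auto
    moreover have "a + 1 + s j \<le> 2*n" "2*n - a' + s j \<le> 2*n"
      using \<open>a' \<le> n\<close> by (auto simp: a'_def)
    ultimately obtain f h where f: "matching_copy_into (A j) red f {a + 1<..a'}"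
      and h: "matching_copy_into (A (k + Suc d)) red h {2*n - a'<..2*n - a' + s j}"
      using block unfolding a'_def by meson
    have "{2*n - a'<..2*n - a' + s j} \<subseteq> {2*n - a'<..<2*n - a}"
      using \<open>a' \<le> n\<close> by (auto simp: a'_def)
    note h = red_copy_into_mono[OF h this]
    have "balanced (A j)" "balanced (nestB A k d)" "balanced (A (k + Suc d))"
      using bal j balanced_nestB[OF bal] Suc.prems(1) by auto
    moreover have "a + 1 \<le> a'" "a' \<le> 2*n - a'" "2*n - a' < 2*n - a" "red (a + 1) (2*n - a)"
      using \<open>a' \<le> n\<close> outer[of a] by (auto simp: a'_def)
    ultimately obtain \<phi> where
      "matching_copy_into (parenthesize (A j @ nestB A k d @ A (k + Suc d))) red \<phi> {a + 1..2*n - a}"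
      using matching_copy_into_layer[OF _ _ _ f g h] by blast
    then show ?case
      unfolding nestB_Suc interval j_def by blast
  qed
qed

lemma has_red_copy_nestB:
  assumes "k \<ge> 1" "\<forall>i\<in>{1..2*k-1}. balanced (A i)"
    and bound: "\<forall>i\<in>{1..k}. ord_ramsey_K3 (length (A i)) (matched (A i)) \<le> s i \<and>
      ord_ramsey_K3 (length (A (2*k-i))) (matched (A (2*k-i))) \<le> s i"
    and n: "n = k + (\<Sum>i=1..k. s i)"
    and "\<not> has_blue_triangle (2*n) red"
    and NM: "\<forall>u v. 1 \<le> u \<and> u < v \<and> v \<le> 2*n \<and> nested_matching n u v \<longrightarrow> red u v"
  shows "has_red_copy (length (nestB A k (k - 1))) (matched (nestB A k (k - 1))) (2*n) red"
proof -
  have nested: "red u (2*n + 1 - u)" if "1 \<le> u" "u \<le> n" for u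
  proof -
    have "u < 2*n + 1 - u" "2*n + 1 - u \<le> 2*n"
      using that by auto
    then show ?thesis
      using NM that by (simp add: nested_matching_def)
  qed
  have "k - 1 < k" "0 + (\<Sum>i=k-(k-1)..k. 1 + s i) \<le> n"
    using assms(1) by (simp_all add: n sum_Suc)
  from nestB_matching_copy_into[OF assms(2) bound assms(5) nested this]
  obtain \<phi> where "matching_copy_into (nestB A k (k - 1)) red \<phi> {0<..2*n - 0}"
    by blast
  then show ?thesis
    unfolding has_red_copy_iff_red_copy_into atLeastSucAtMost_greaterThanAtMost[symmetric] by auto
qed

theorem lemma2p3:
  fixes k :: nat and A :: "nat \<Rightarrow> bool list"
  assumes "k \<ge> 1"
    and "\<forall>i\<in>{1..2*k-1}. balanced (A i)"
  shows "balanced (nestB A k (k - 1)) \<and>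
    ord_ramsey_K3 (length (nestB A k (k - 1))) (matched (nestB A k (k - 1)))
      \<le> ord_ramsey_K3 (2 * (k + (\<Sum>i=1..k. max (ord_ramsey_K3 (length (A i)) (matched (A i)))
                                                 (ord_ramsey_K3 (length (A (2*k-i))) (matched (A (2*k-i)))))))
                      (nested_matching (k + (\<Sum>i=1..k. max (ord_ramsey_K3 (length (A i)) (matched (A i)))
                                                 (ord_ramsey_K3 (length (A (2*k-i))) (matched (A (2*k-i)))))))"
proof -
  define s where "s i = max (ord_ramsey_K3 (length (A i)) (matched (A i)))
    (ord_ramsey_K3 (length (A (2*k-i))) (matched (A (2*k-i))))" for i
  define n where "n = k + (\<Sum>i=1..k. s i)"
  have bound: "\<forall>i\<in>{1..k}. ord_ramsey_K3 (length (A i)) (matched (A i)) \<le> s i \<and>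
      ord_ramsey_K3 (length (A (2*k-i))) (matched (A (2*k-i))) \<le> s i"
    by (simp add: s_def)
  have "arrows_K3 (length (nestB A k (k - 1))) (matched (nestB A k (k - 1)))
      (ord_ramsey_K3 (2*n) (nested_matching n))"
    by (rule arrows_K3_transfer[OF arrows_K3_ord_ramsey_K3])
      (rule has_red_copy_nestB[OF assms bound n_def])
  then show ?thesis
    using balanced_nestB[OF assms(2)] assms(1) ord_ramsey_K3_le unfolding n_def s_def by simp
qed

end
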